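(* For every integer $n\ge5$, $3b(n)-\tfrac32\le \tilde m_{\mathrm{opt}}(n)<3b(n)+\tfrac12$; equivalently, $\tilde m_{\mathrm{opt}}(n)$ equals $\lceil 3b(n)-\frac32\rceil$ or $\lceil 3b(n)-\frac32\rceil+1$.
   Context: Let $b(n)=(1+\frac1n)\log_2(n+1)-1$. For $1\le m\le n$ put $E_m[\ell]=\sum_{j=0}^{m-1}\frac{n}{n-j}$ and $\tilde F(m)=\dfrac{2m\,b(n)+\frac12\sum_{j=1}^{m-1}\frac{j(j+1)}{n-j}}{E_m[\ell]}$. Let $\tilde m_{\mathrm{opt}}(n)$ be the smallest $m\in\{1,\dots,n\}$ minimizing $\tilde F(m)$. *)

theory Defs
  imports Complex_Main
begin

definition bfun :: "nat \<Rightarrow> real" where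
  "bfun n = (1 + 1 / real n) * log 2 (real n + 1) - 1"

definition Eell :: "nat \<Rightarrow> nat \<Rightarrow> real" where
  "Eell n m = (\<Sum>j = 0..<m. real n / (real n - real j))"

definition Ftilde :: "nat \<Rightarrow> nat \<Rightarrow> real" where
  "Ftilde n m = (2 * real m * bfun n
      + (1/2) * (\<Sum>j = 1..<m. real j * (real j + 1) / (real n - real j))) / Eell n m"

definition mopt :: "nat \<Rightarrow> nat" where
  "mopt n = (LEAST m. m \<in> {1..n} \<and> (\<forall>k \<in> {1..n}. Ftilde n m \<le> Ftilde n k))"

end

theory Submission
  imports Defs
begin

(*
  With b = b(n), E_m = E_m[l] and Delta(m) = sum_{k=1..m} (2b - k) E_k, a telescoping
  computation gives F(m+1) - F(m) = -Delta(m) / ((n - m) E_m E_{m+1}), so the minimiser is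
  located by the sign of Delta. Writing 2 Delta(m) = sum_{j<m} n/(n-j) (m-j)(theta-j) with
  theta = 4b - m - 1 and comparing the increasing weights n/(n-j) with their value at theta
  shows Delta(m) <= 0 once m >= 3b - 1/2. Conversely, splitting E_k = k + sum_{j<k} j/(n-j)
  leaves the main term m(m+1)(6b-2m-1)/6 > 0 for m < 3b - 3/2, and the numerical estimate
  3(b+1)^2 <= 4n + 10 (n >= 5) keeps the correction terms below it. So F strictly decreases
  below 3b - 3/2 and does not increase from 3b - 1/2 on, which traps the least minimiser.
*)

lemma log2_le_of_power_le:
  fixes x :: real and p q :: nat
  assumes "0 < x" "0 < q" "x ^ q \<le> 2 ^ p"
  shows "log 2 x \<le> real p / real q"
proof -
  have "real q * log 2 x = log 2 (x ^ q)" using assms(1) by (simp add: log_nat_power)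
  also have "\<dots> \<le> log 2 (2 ^ p)" using assms by (subst log_le_cancel_iff) auto
  also have "\<dots> = real p" by simp
  finally show ?thesis using assms(2) by (simp add: field_simps)
qed

lemma square_le_pow2: "6 \<le> j \<Longrightarrow> 64 * (real j + 1)^2 \<le> 49 * 2 ^ j"
proof (induction j rule: nat_induct_at_least)
  case base then show ?case by simp
next
  case (Suc j)
  have "36 \<le> real j * real j" using Suc.hyps mult_mono[of 6 "real j" 6 "real j"] by simp
  then have "64 * (real (Suc j) + 1)^2 \<le> 2 * (64 * (real j + 1)^2)"
    by (simp add: power2_eq_square algebra_simps)
  also have "\<dots> \<le> 2 * (49 * 2 ^ j)" using Suc.IH by simp
  finally show ?case by simp
qed

lemma sum_mult_deviation_le:
  fixes f :: "real \<Rightarrow> real"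
  assumes "mono_on S f" "\<theta> \<in> S" "\<And>j. j \<in> A \<Longrightarrow> x j \<in> S" "\<And>j. j \<in> A \<Longrightarrow> 0 \<le> a j"
  shows "(\<Sum>j\<in>A. f (x j) * (a j * (\<theta> - x j))) \<le> f \<theta> * (\<Sum>j\<in>A. a j * (\<theta> - x j))"
proof -
  have "f (x j) * (a j * (\<theta> - x j)) \<le> f \<theta> * (a j * (\<theta> - x j))" if "j \<in> A" for j
  proof (cases "x j \<le> \<theta>")
    case True
    then have "f (x j) \<le> f \<theta>" using assms that by (auto intro: mono_onD)
    then show ?thesis using True assms(4)[OF that] by (intro mult_right_mono) auto
  next
    case False
    then have "f \<theta> \<le> f (x j)" using assms that by (auto intro: mono_onD)
    then show ?thesis using False assms(4)[OF that] by (intro mult_right_mono_neg mult_nonneg_nonpos) auto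
  qed
  then show ?thesis by (simp add: sum_distrib_left sum_mono)
qed

lemma mono_on_divide_diff:
  fixes c :: real
  assumes "0 \<le> c"
  shows "mono_on {..<c} (\<lambda>t. c / (c - t))"
proof (rule mono_onI)
  fix r s assume "r \<in> {..<c}" "s \<in> {..<c}" "r \<le> s"
  then show "c / (c - r) \<le> c / (c - s)" using assms by (intro divide_left_mono) auto
qed

lemma sum_lessThan_diff: "(\<Sum>j<k. t - real j) = real k * t - real k * (real k - 1) / 2"
  by (induction k) (simp_all add: field_simps)

lemma sum_lessThan_diff_mult_diff:
  "(\<Sum>j<m. (real m - real j) * (t - real j)) = real m * (real m + 1) * (3 * t - real m + 1) / 6"
proof (induction m)
  case 0 then show ?case by simp
next
  case (Suc m)
  have "(\<Sum>j<Suc m. (real (Suc m) - real j) * (t - real j))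
      = (\<Sum>j<m. (real m - real j) * (t - real j)) + (\<Sum>j<Suc m. t - real j)"
    by (simp add: sum.distrib[symmetric] algebra_simps)
  then show ?case unfolding Suc.IH sum_lessThan_diff by (simp add: field_simps)
qed

lemma sum_pos_part_le: "(\<Sum>k=1..m. max 0 (real k - c)) \<le> (real m - c + 1/2)^2 / 2"
proof (induction m)
  case 0 then show ?case by simp
next
  case (Suc m)
  show ?case
  proof (cases "c < real (Suc m)")
    case True
    then have "(\<Sum>k=1..Suc m. max 0 (real k - c)) \<le> (real m - c + 1/2)^2 / 2 + (real m + 1 - c)"
      using Suc.IH by simp
    also have "\<dots> = (real (Suc m) - c + 1/2)^2 / 2" by (simp add: power2_eq_square field_simps)
    finally show ?thesis .
  next
    case False
    then have "(\<Sum>k=1..Suc m. max 0 (real k - c)) = 0" by (intro sum.neutral) auto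
    then show ?thesis by simp
  qed
qed

lemma sum_atLeastAtMost_diff_mult:
  "(\<Sum>k=1..m. (2 * b - real k) * real k) = real m * (real m + 1) * (6 * b - 2 * real m - 1) / 6"
  by (induction m) (simp_all add: field_simps)

lemma excess_pos_part_lt:
  fixes b x m d u p :: real
  assumes "1 \<le> m" "0 < d" "0 < x" "x < b - 1" "3 * (b - 1)^2 < 4 * d"
    and "0 \<le> u" "u \<le> m * (m - 1) / (2 * d)" and "0 \<le> p" "p \<le> x^2 / 2"
  shows "u * p < m * (m + 1) * (2 * b - 2 * x) / 6"
proof -
  have "x^2 < (b - 1)^2" using assms by (intro power_strict_mono) auto
  then have x_sq: "3 * x^2 < 4 * d" using assms by linarith
  have "3 * (m - 1) * x^2 \<le> (m + 1) * (3 * x^2)"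
    using mult_right_mono[of "3 * (m - 1)" "3 * (m + 1)" "x^2"] by (simp add: algebra_simps)
  also have "\<dots> < (m + 1) * (4 * d)" using x_sq assms by (intro mult_strict_left_mono) auto
  also have "\<dots> \<le> (m + 1) * (4 * d) * (b - x)"
    using mult_left_mono[of 1 "b - x" "(m + 1) * (4 * d)"] assms by simp
  finally have key: "3 * (m - 1) * x^2 < 4 * (m + 1) * d * (b - x)" by (simp add: algebra_simps)
  have "u * p \<le> (m * (m - 1) / (2 * d)) * (x^2 / 2)"
    using assms by (intro mult_mono) auto
  also have "\<dots> = m * (3 * (m - 1) * x^2) / (12 * d)" using assms by (simp add: field_simps)
  also have "\<dots> < m * (4 * (m + 1) * d * (b - x)) / (12 * d)"
    using key assms by (intro divide_strict_right_mono mult_strict_left_mono) auto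
  also have "\<dots> = m * (m + 1) * (2 * b - 2 * x) / 6" using assms by (simp add: field_simps)
  finally show ?thesis .
qed

section \<open>Estimates for \<open>b(n)\<close>\<close>

lemma bfun_plus_one:
  assumes "0 < n"
  shows "bfun n + 1 = (real n + 1) / real n * log 2 (real n + 1)"
  using assms by (simp add: bfun_def field_simps)

lemma bfun_sq_bound_interval:
  fixes A B p q :: nat
  assumes "0 < A" "A \<le> n" "n \<le> B" "0 < q" "(real B + 1) ^ q \<le> 2 ^ p"
    and "3 * ((real A + 1) / real A)^2 * (real p / real q)^2 \<le> 4 * real A + 10"
  shows "3 * (bfun n + 1)^2 \<le> 4 * real n + 10"
proof -
  have "log 2 (real n + 1) \<le> log 2 (real B + 1)" using assms by simp
  also have "\<dots> \<le> real p / real q" using assms by (intro log2_le_of_power_le) auto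
  finally have log_le: "log 2 (real n + 1) \<le> real p / real q" .
  have ratio_le: "(real n + 1) / real n \<le> (real A + 1) / real A"
    using assms by (simp add: field_simps)
  have "3 * (bfun n + 1)^2 = 3 * ((real n + 1) / real n)^2 * (log 2 (real n + 1))^2"
    using assms by (simp only: bfun_plus_one power_mult_distrib mult.assoc)
  also have "\<dots> \<le> 3 * ((real A + 1) / real A)^2 * (real p / real q)^2"
    using ratio_le log_le by (intro mult_mono power_mono mult_left_mono) auto
  also have "\<dots> \<le> 4 * real n + 10" using assms by linarith
  finally show ?thesis .
qed

lemma bfun_sq_bound_large:
  assumes "64 \<le> n"
  shows "3 * (bfun n + 1)^2 \<le> 4 * real n + 10"
proof -
  obtain j where j: "2 ^ j \<le> n" "n < 2 ^ (j + 1)" using ex_power_ivl1[of 2 n] assms by auto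
  have "2 ^ 6 < (2::nat) ^ (j + 1)" using j assms by simp
  then have "6 \<le> j" by (subst (asm) power_strict_increasing_iff) auto
  have n_ge: "2 ^ j \<le> real n" using j(1) by (metis of_nat_le_iff of_nat_numeral of_nat_power)
  have "real n + 1 \<le> 2 ^ (j + 1)" using j(2)
    by (metis Suc_eq_plus1 Suc_leI of_nat_1 of_nat_add of_nat_le_iff of_nat_numeral of_nat_power)
  then have "log 2 (real n + 1) \<le> real (j + 1) / real (1::nat)"
    by (intro log2_le_of_power_le) auto
  then have log_le: "log 2 (real n + 1) \<le> real j + 1" by simp
  have ratio_le: "(real n + 1) / real n \<le> 65 / 64" using assms by (simp add: field_simps)
  have "3 * (bfun n + 1)^2 = 3 * ((real n + 1) / real n)^2 * (log 2 (real n + 1))^2"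
    using assms by (simp only: bfun_plus_one power_mult_distrib mult.assoc)
  also have "\<dots> \<le> 3 * (65 / 64)^2 * (real j + 1)^2"
    using ratio_le log_le by (intro mult_mono power_mono mult_left_mono) auto
  also have "\<dots> \<le> 3 * (65 / 64)^2 * (49 / 64 * 2 ^ j)" using square_le_pow2[OF \<open>6 \<le> j\<close>] by simp
  also have "\<dots> \<le> 4 * real n + 10" by (simp add: power2_eq_square) (use n_ge in linarith)
  finally show ?thesis .
qed

lemma bfun_sq_bound:
  assumes "5 \<le> n"
  shows "3 * (bfun n + 1)^2 \<le> 4 * real n + 10"
proof -
  \<comment> \<open>Tight near \<open>n = 5\<close> (about 28.9 against 30), hence short intervals for small \<open>n\<close>.\<close>
  consider "n = 5" | "n = 6" | "n = 7" | "n = 8" | "9 \<le> n \<and> n \<le> 10" | "11 \<le> n \<and> n \<le> 13"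
    | "14 \<le> n \<and> n \<le> 19" | "20 \<le> n \<and> n \<le> 35" | "36 \<le> n \<and> n \<le> 116" | "64 \<le> n"
    using assms by linarith
  then show ?thesis
  proof cases
    case 1 then show ?thesis using bfun_sq_bound_interval[of 5 n 5 5 13] by (simp add: power_divide)
  next
    case 2 then show ?thesis using bfun_sq_bound_interval[of 6 n 6 6 17] by (simp add: power_divide)
  next
    case 3 then show ?thesis using bfun_sq_bound_interval[of 7 n 7 1 3] by (simp add: power_divide)
  next
    case 4 then show ?thesis using bfun_sq_bound_interval[of 8 n 8 5 16] by (simp add: power_divide)
  next
    case 5 then show ?thesis using bfun_sq_bound_interval[of 9 n 10 2 7] by (simp add: power_divide)
  next
    case 6 then show ?thesis using bfun_sq_bound_interval[of 11 n 13 6 23] by (simp add: power_divide)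
  next
    case 7 then show ?thesis using bfun_sq_bound_interval[of 14 n 19 3 13] by (simp add: power_divide)
  next
    case 8 then show ?thesis using bfun_sq_bound_interval[of 20 n 35 5 26] by (simp add: power_divide)
  next
    case 9 then show ?thesis using bfun_sq_bound_interval[of 36 n 116 8 55] by (simp add: power_divide)
  next
    case 10 then show ?thesis by (rule bfun_sq_bound_large)
  qed
qed

lemma bfun_ge_one:
  assumes "3 \<le> n"
  shows "1 \<le> bfun n"
proof -
  have "2 = log 2 ((2::real) ^ 2)" using log_pow_cancel[of "2::real" 2] by simp
  also have "\<dots> \<le> log 2 (real n + 1)" using assms by (subst log_le_cancel_iff) auto
  finally have "2 \<le> log 2 (real n + 1)" .
  moreover have "0 \<le> log 2 (real n + 1) / real n" using assms by simp
  moreover have "bfun n = log 2 (real n + 1) + log 2 (real n + 1) / real n - 1"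
    by (simp add: bfun_def distrib_right)
  ultimately show ?thesis by linarith
qed

lemma three_bfun_le:
  assumes "5 \<le> n"
  shows "3 * bfun n - 3/2 \<le> real n"
proof (rule ccontr)
  let ?b = "bfun n"
  assume "\<not> ?thesis"
  then have "(real n + 9/2)^2 < (3 * (?b + 1))^2" by (intro power_strict_mono) auto
  then have "real n * real n + 9 * real n + 81/4 < 9 * (?b * ?b) + 18 * ?b + 9"
    by (simp add: power2_eq_square algebra_simps)
  moreover have "3 * (?b * ?b) + 6 * ?b + 3 \<le> 4 * real n + 10"
    using bfun_sq_bound[OF assms] by (simp add: power2_eq_square algebra_simps)
  moreover have "5 * real n \<le> real n * real n" using assms by (intro mult_right_mono) auto
  ultimately show False using assms by linarith
qed

section \<open>The forward difference of \<open>F\<close>\<close>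

definition Fnum :: "nat \<Rightarrow> nat \<Rightarrow> real" where
  "Fnum n m = 2 * real m * bfun n + (1/2) * (\<Sum>j = 1..<m. real j * (real j + 1) / (real n - real j))"

definition Delta :: "nat \<Rightarrow> nat \<Rightarrow> real" where
  "Delta n m = (\<Sum>k = 1..m. (2 * bfun n - real k) * Eell n k)"

lemma Ftilde_eq_Fnum_div: "Ftilde n m = Fnum n m / Eell n m"
  by (simp add: Ftilde_def Fnum_def)

lemma Eell_Suc: "Eell n (Suc m) = Eell n m + real n / (real n - real m)"
  by (simp add: Eell_def)

lemma Fnum_Suc:
  "Fnum n (Suc m) = Fnum n m + 2 * bfun n + (1/2) * (real m * (real m + 1) / (real n - real m))"
proof (cases m)
  case (Suc k)
  then show ?thesis by (simp add: Fnum_def algebra_simps)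
qed (simp add: Fnum_def)

lemma Delta_Suc: "Delta n (Suc m) = Delta n m + (2 * bfun n - real m - 1) * Eell n (Suc m)"
  by (simp add: Delta_def)

lemma Eell_pos: "1 \<le> m \<Longrightarrow> m \<le> n \<Longrightarrow> 0 < Eell n m"
  unfolding Eell_def by (intro sum_pos) auto

lemma Delta_eq_Fnum_Eell:
  "m \<le> n \<Longrightarrow>
    Delta n m = real n * Fnum n m - (2 * bfun n * (real n - real m) + real m * (real m + 1) / 2) * Eell n m"
proof (induction m)
  case 0 then show ?case by (simp add: Fnum_def Eell_def Delta_def)
next
  case (Suc m)
  then have IH: "Delta n m = real n * Fnum n m
      - (2 * bfun n * (real n - real m) + real m * (real m + 1) / 2) * Eell n m"
    by simp
  define d where "d = real n - real m"
  have "d \<noteq> 0" "real n = real m + d" using Suc.prems by (auto simp: d_def)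
  then show ?case
    unfolding Delta_Suc IH Fnum_Suc Eell_Suc d_def[symmetric] by (simp add: field_simps)
qed

lemma Ftilde_Suc_diff:
  assumes "1 \<le> m" "m < n"
  shows "Ftilde n (Suc m) - Ftilde n m = - Delta n m / ((real n - real m) * Eell n m * Eell n (Suc m))"
proof -
  have E: "Eell n m \<noteq> 0" "Eell n (Suc m) \<noteq> 0" using assms Eell_pos by (auto simp: less_le)
  define d where "d = real n - real m"
  have "d \<noteq> 0" "real n = real m + d" using assms by (auto simp: d_def)
  then have "Fnum n (Suc m) * Eell n m - Eell n (Suc m) * Fnum n m = - Delta n m / d"
    unfolding Delta_eq_Fnum_Eell[OF less_imp_le[OF assms(2)]] Fnum_Suc Eell_Suc d_def[symmetric]
    by (simp add: field_simps)
  then show ?thesis using E by (simp add: Ftilde_eq_Fnum_div diff_frac_eq d_def mult.assoc mult.commute)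
qed

lemma Ftilde_Suc_less:
  assumes "1 \<le> m" "m < n" "0 < Delta n m"
  shows "Ftilde n (Suc m) < Ftilde n m"
proof -
  have "0 < (real n - real m) * Eell n m * Eell n (Suc m)"
    using Eell_pos[of m n] Eell_pos[of "Suc m" n] assms by (intro mult_pos_pos) auto
  then have "0 < Delta n m / ((real n - real m) * Eell n m * Eell n (Suc m))"
    using assms(3) by (rule divide_pos_pos[rotated])
  then show ?thesis using Ftilde_Suc_diff[OF assms(1,2)] by simp
qed

lemma Ftilde_le_Suc:
  assumes "1 \<le> m" "m < n" "Delta n m \<le> 0"
  shows "Ftilde n m \<le> Ftilde n (Suc m)"
proof -
  have "0 < (real n - real m) * Eell n m * Eell n (Suc m)"
    using Eell_pos[of m n] Eell_pos[of "Suc m" n] assms by (intro mult_pos_pos) auto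
  then have "Delta n m / ((real n - real m) * Eell n m * Eell n (Suc m)) \<le> 0"
    using assms(3) by (intro divide_nonpos_pos)
  then show ?thesis using Ftilde_Suc_diff[OF assms(1,2)] by simp
qed

section \<open>The sign of \<open>\<Delta>\<close>\<close>

lemma Eell_lessThan: "Eell n m = (\<Sum>j<m. real n / (real n - real j))"
  by (simp add: Eell_def atLeast0LessThan)

lemma Delta_eq_weighted:
  "2 * Delta n m = (\<Sum>j<m. real n / (real n - real j)
                              * ((real m - real j) * (4 * bfun n - real m - 1 - real j)))"
proof (induction m)
  case 0 show ?case by (simp add: Delta_def)
next
  case (Suc m)
  define c where "c = 2 * (2 * bfun n - real m - 1)"
  have "2 * Delta n (Suc m) = 2 * Delta n m + (\<Sum>j<Suc m. real n / (real n - real j)) * c"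
    unfolding Delta_Suc c_def Eell_lessThan by (simp add: algebra_simps add_divide_distrib)
  also have "\<dots> = (\<Sum>j<Suc m. real n / (real n - real j)
      * ((real m - real j) * (4 * bfun n - real m - 1 - real j) + c))"
    unfolding Suc.IH sum_distrib_right distrib_left sum.distrib by simp
  also have "\<dots> = (\<Sum>j<Suc m. real n / (real n - real j)
      * ((real (Suc m) - real j) * (4 * bfun n - real (Suc m) - 1 - real j)))"
    by (intro sum.cong refl arg_cong[where f = "(*) _"]) (simp add: c_def field_simps)
  finally show ?case .
qed

lemma Delta_nonpos:
  assumes "m < n" "6 * bfun n \<le> 2 * real m + 1"
  shows "Delta n m \<le> 0"
proof -
  define \<theta> where "\<theta> = 4 * bfun n - real m - 1"
  have \<theta>_le: "3 * \<theta> \<le> real m - 1" using assms(2) by (simp add: \<theta>_def)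
  then have "\<theta> < real n" using assms(1) by linarith
  \<comment> \<open>The weights increase with j, and the factor \<open>\<theta> - j\<close> changes sign at \<open>\<theta>\<close>.\<close>
  have "2 * Delta n m \<le> real n / (real n - \<theta>) * (\<Sum>j<m. (real m - real j) * (\<theta> - real j))"
    unfolding Delta_eq_weighted \<theta>_def[symmetric] using \<open>\<theta> < real n\<close> assms(1)
    by (intro sum_mult_deviation_le[OF mono_on_divide_diff[of "real n"]]) auto
  also have "\<dots> = real n / (real n - \<theta>) * (real m * (real m + 1) * (3 * \<theta> - real m + 1) / 6)"
    unfolding sum_lessThan_diff_mult_diff ..
  also have "\<dots> \<le> 0"
    using \<theta>_le \<open>\<theta> < real n\<close> by (intro mult_nonneg_nonpos divide_nonpos_pos) auto
  finally show ?thesis by simp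
qed

definition Eell_excess :: "nat \<Rightarrow> nat \<Rightarrow> real" where
  "Eell_excess n k = (\<Sum>j<k. real j / (real n - real j))"

lemma Eell_eq_excess: "k \<le> n \<Longrightarrow> Eell n k = real k + Eell_excess n k"
  unfolding Eell_lessThan Eell_excess_def
  by (induction k) (simp_all add: field_simps)

lemma Eell_excess_nonneg: "k \<le> n \<Longrightarrow> 0 \<le> Eell_excess n k"
  unfolding Eell_excess_def by (intro sum_nonneg) auto

lemma Eell_excess_mono: "k \<le> m \<Longrightarrow> m \<le> n \<Longrightarrow> Eell_excess n k \<le> Eell_excess n m"
  unfolding Eell_excess_def by (intro sum_mono2) auto

lemma Eell_excess_le:
  assumes "m \<le> n"
  shows "Eell_excess n m \<le> real m * (real m - 1) / (2 * (real n - real m + 1))"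
proof -
  have "Eell_excess n m \<le> (\<Sum>j<m. real j / (real n - real m + 1))"
    unfolding Eell_excess_def using assms by (intro sum_mono divide_left_mono) auto
  also have "\<dots> = (\<Sum>j<m. real j) / (real n - real m + 1)"
    by (simp add: sum_divide_distrib)
  also have "(\<Sum>j<m. real j) = real m * (real m - 1) / 2"
    by (induction m) (simp_all add: field_simps)
  finally show ?thesis by simp
qed

lemma Delta_pos:
  assumes "1 \<le> m" "m < n" "2 * real m + 3 < 6 * bfun n" "3 * (bfun n + 1)^2 \<le> 4 * real n + 10"
  shows "0 < Delta n m"
proof -
  define b where "b = bfun n"
  define u where "u = Eell_excess n m"
  define A where "A = real m * (real m + 1) * (6 * b - 2 * real m - 1) / 6"
  define P where "P = (\<Sum>k=1..m. max 0 (real k - 2 * b))"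
  have "0 < A" unfolding A_def using assms(1,3) b_def by (intro divide_pos_pos mult_pos_pos) auto
  have "Delta n m = (\<Sum>k=1..m. (2 * b - real k) * real k + (2 * b - real k) * Eell_excess n k)"
    unfolding Delta_def b_def using assms(2) by (intro sum.cong) (auto simp: Eell_eq_excess algebra_simps)
  then have Delta_split: "Delta n m = A + (\<Sum>k=1..m. (2 * b - real k) * Eell_excess n k)"
    unfolding sum.distrib A_def sum_atLeastAtMost_diff_mult .
  have "- (u * P) = (\<Sum>k=1..m. - (u * max 0 (real k - 2 * b)))"
    unfolding P_def by (simp add: sum_distrib_left sum_negf)
  also have "\<dots> \<le> (\<Sum>k=1..m. (2 * b - real k) * Eell_excess n k)"
  proof (rule sum_mono)
    fix k assume "k \<in> {1..m}"
    then have e: "0 \<le> Eell_excess n k" "Eell_excess n k \<le> u"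
      using assms(2) by (auto simp: u_def intro: Eell_excess_nonneg Eell_excess_mono)
    show "- (u * max 0 (real k - 2 * b)) \<le> (2 * b - real k) * Eell_excess n k"
    proof (cases "real k \<le> 2 * b")
      case True
      then show ?thesis using e by simp
    next
      case False
      then have "(real k - 2 * b) * Eell_excess n k \<le> (real k - 2 * b) * u"
        using e by (intro mult_left_mono) auto
      then show ?thesis using False by (simp add: algebra_simps)
    qed
  qed
  finally have Delta_ge: "A - u * P \<le> Delta n m" using Delta_split by linarith
  show ?thesis
  proof (cases "real m \<le> 2 * b")
    case True
    then have "P = 0" unfolding P_def by (intro sum.neutral) auto
    then show ?thesis using Delta_ge \<open>0 < A\<close> by simp
  next
    case False
    define x where "x = real m - 2 * b + 1/2"
    define d where "d = real n - real m + 1"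
    have "3 * (b - 1)^2 < 4 * d"
      using assms(3,4) by (simp add: b_def d_def power2_eq_square algebra_simps)
    moreover have "0 \<le> u" "u \<le> real m * (real m - 1) / (2 * d)"
      using assms(2) Eell_excess_nonneg Eell_excess_le by (auto simp: u_def d_def)
    moreover have "0 \<le> P" "P \<le> x^2 / 2"
      unfolding P_def x_def using sum_pos_part_le[where c = "2 * b" and m = m]
      by (auto intro: sum_nonneg simp: algebra_simps)
    moreover have "1 \<le> real m" "0 < d" "0 < x" "x < b - 1"
      using False assms(1,2,3) by (auto simp: x_def d_def b_def)
    ultimately have "u * P < real m * (real m + 1) * (2 * b - 2 * x) / 6"
      by (intro excess_pos_part_lt) auto
    also have "\<dots> = A" by (simp add: A_def x_def algebra_simps)
    finally show ?thesis using Delta_ge by linarith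
  qed
qed

lemma mopt_minimizes:
  assumes "1 \<le> n"
  shows "mopt n \<in> {1..n} \<and> (\<forall>k\<in>{1..n}. Ftilde n (mopt n) \<le> Ftilde n k)"
proof -
  let ?m = "arg_min_on (Ftilde n) {1..n}"
  have "?m \<in> {1..n} \<and> (\<forall>k\<in>{1..n}. Ftilde n ?m \<le> Ftilde n k)"
    using arg_min_if_finite[of "{1..n}" "Ftilde n"] assms by (auto simp: not_less)
  then show ?thesis unfolding mopt_def by (rule LeastI)
qed

lemma mopt_le:
  assumes "m \<in> {1..n}" "\<forall>k\<in>{1..n}. Ftilde n m \<le> Ftilde n k"
  shows "mopt n \<le> m"
  unfolding mopt_def using assms by (intro Least_le) blast

theorem mainTheorem3:
  fixes n :: nat
  assumes "n \<ge> 5"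
  shows "3 * bfun n - 3/2 \<le> real (mopt n) \<and> real (mopt n) < 3 * bfun n + 1/2"
proof -
  have mopt: "mopt n \<in> {1..n}" "\<forall>k\<in>{1..n}. Ftilde n (mopt n) \<le> Ftilde n k"
    using mopt_minimizes assms by auto
  have "3 * bfun n - 3/2 \<le> real (mopt n)"
  proof (rule ccontr)
    assume small: "\<not> ?thesis"
    then have "mopt n < n" using mopt(1) three_bfun_le[OF assms] by (auto simp: le_less)
    then have "Ftilde n (Suc (mopt n)) < Ftilde n (mopt n)"
      using small mopt(1) bfun_sq_bound[OF assms] by (intro Ftilde_Suc_less Delta_pos) auto
    moreover have "Ftilde n (mopt n) \<le> Ftilde n (Suc (mopt n))" using mopt(2) \<open>mopt n < n\<close> by simp
    ultimately show False by simp
  qed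
  moreover have "real (mopt n) < 3 * bfun n + 1/2"
  proof (rule ccontr)
    assume large: "\<not> ?thesis"
    then obtain m where m: "mopt n = Suc m" "1 \<le> m"
      using bfun_ge_one[of n] assms by (cases "mopt n") (auto simp: not_less_eq_eq)
    then have "Ftilde n m \<le> Ftilde n (mopt n)"
      using large mopt(1) by (auto intro!: Ftilde_le_Suc Delta_nonpos)
    then have "mopt n \<le> m" using m mopt by (intro mopt_le) force+
    with m show False by simp
  qed
  ultimately show ?thesis ..
qed

end
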